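(* Let $d\ge 3$ and let $S$ be the set of vertices $(x,y,z)$ of $T_d$ with $x\ge1$, $z\ge1$, $y\le d-1$; the subgraph induced by $S$ is isomorphic to $T_{d-3}$ via $(x,y,z)\mapsto(x-1,y-2,z-1)$, with corners $(1,2,1)$, $(d-2,d-1,1)$, $(1,d-1,d-2)$. Then for every $v\in S$, $ecc_{T_d}(v)=ecc_{T_{d-3}}(v)+2$, where $ecc_{T_{d-3}}$ denotes eccentricity in the induced subgraph on $S$.
   Context: Let $\alpha_1=(1,0)$, $\alpha_2=(-\tfrac12,\tfrac{\sqrt3}{2})$. $T_d$ is the graph on $\{a\alpha_1+b\alpha_2 : a,b\in\mathbb Z,\ 0\le b\le a\le d\}$ with two vertices adjacent iff their Euclidean distance is $1$. Each vertex $a\alpha_1+b\alpha_2$ is given coordinates $(x,y,z)=(a-b,\,a,\,b)$, so $0\le x,y,z\le d$ and $y=x+z$; the corners are $(0,0,0)$, $(d,d,0)$, $(0,d,d)$. The eccentricity of a vertex is its maximum distance to the other vertices of the graph. *)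

theory Defs
  imports Complex_Main
begin

definition alpha1 :: complex where "alpha1 = 1"
definition alpha2 :: complex where "alpha2 = Complex (-1/2) (sqrt 3 / 2)"

definition tri_pt :: "int \<times> int \<Rightarrow> complex" where
  "tri_pt p = of_int (fst p) * alpha1 + of_int (snd p) * alpha2"

definition tri_V :: "nat \<Rightarrow> (int \<times> int) set" where
  "tri_V d = {(a, b). 0 \<le> b \<and> b \<le> a \<and> a \<le> int d}"

definition tri_adj :: "int \<times> int \<Rightarrow> int \<times> int \<Rightarrow> bool" where
  "tri_adj p q \<longleftrightarrow> cmod (tri_pt p - tri_pt q) = 1"

definition xyz :: "int \<times> int \<Rightarrow> int \<times> int \<times> int" where
  "xyz p = (fst p - snd p, fst p, snd p)"

definition is_walk :: "'a set \<Rightarrow> ('a \<Rightarrow> 'a \<Rightarrow> bool) \<Rightarrow> 'a list \<Rightarrow> bool" where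
  "is_walk V E ps \<longleftrightarrow> ps \<noteq> [] \<and> set ps \<subseteq> V \<and>
     (\<forall>i. Suc i < length ps \<longrightarrow> E (ps ! i) (ps ! Suc i))"

definition gdist :: "'a set \<Rightarrow> ('a \<Rightarrow> 'a \<Rightarrow> bool) \<Rightarrow> 'a \<Rightarrow> 'a \<Rightarrow> nat" where
  "gdist V E u v = (LEAST n. \<exists>ps. is_walk V E ps \<and> hd ps = u \<and> last ps = v \<and> length ps = Suc n)"

definition ecc :: "'a set \<Rightarrow> ('a \<Rightarrow> 'a \<Rightarrow> bool) \<Rightarrow> 'a \<Rightarrow> nat" where
  "ecc V E v = Max (gdist V E v ` V)"

definition inner_S :: "nat \<Rightarrow> (int \<times> int) set" where
  "inner_S d = {p \<in> tri_V d. (case xyz p of (x, y, z) \<Rightarrow> x \<ge> 1 \<and> z \<ge> 1 \<and> y \<le> int d - 1)}"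

text \<open>The map (x,y,z) |-> (x-1,y-2,z-1), i.e. (a,b) |-> (a-2,b-1).\<close>
definition shift_map :: "int \<times> int \<Rightarrow> int \<times> int" where
  "shift_map p = (fst p - 2, snd p - 1)"

end

theory Submission imports Defs begin

text \<open>The graph T_d is a triangular piece of the triangular lattice, on which the graph
  distance is the hexagonal distance max(|dx|, |dy|, |dz|). Any region cut out by
  half-planes x \<ge> x0, z \<ge> z0, y \<le> y1 is geodesically convex for this distance (from any
  vertex one can step towards any target while staying inside), so its graph distance is
  the hexagonal distance and the eccentricity of a vertex is its largest distance to the
  three corners, namely max(y - x0 - z0, y1 - z0 - x, y1 - x0 - z). Passing from
  (x0, z0, y1) = (0, 0, d) to (1, 1, d - 1) lowers each of these three quantities by 2.\<close>

definition hex_dist :: "int \<times> int \<Rightarrow> int \<times> int \<Rightarrow> int" where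
  "hex_dist p q = max \<bar>fst p - fst q\<bar> (max \<bar>snd p - snd q\<bar> \<bar>(fst p - snd p) - (fst q - snd q)\<bar>)"

lemma hex_dist_le_iff:
  "hex_dist p q \<le> k \<longleftrightarrow>
     \<bar>fst p - fst q\<bar> \<le> k \<and> \<bar>snd p - snd q\<bar> \<le> k \<and> \<bar>(fst p - snd p) - (fst q - snd q)\<bar> \<le> k"
  unfolding hex_dist_def by simp

lemma hex_dist_nonneg: "hex_dist p q \<ge> 0"
  unfolding hex_dist_def by simp

lemma hex_dist_eq_0_iff: "hex_dist p q = 0 \<longleftrightarrow> p = q"
  unfolding hex_dist_def by (cases p, cases q) auto

lemma hex_dist_ge:
  "\<bar>fst p - fst q\<bar> \<le> hex_dist p q" "\<bar>snd p - snd q\<bar> \<le> hex_dist p q"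
  "\<bar>(fst p - snd p) - (fst q - snd q)\<bar> \<le> hex_dist p q"
  unfolding hex_dist_def by simp_all

lemma hex_dist_triangle: "hex_dist p r \<le> hex_dist p q + hex_dist q r"
  unfolding hex_dist_le_iff using hex_dist_ge[of p q] hex_dist_ge[of q r] by linarith

lemma hex_dist_translate:
  "hex_dist (fst p + s, snd p + t) (fst q + s, snd q + t) = hex_dist p q"
  unfolding hex_dist_def by (simp add: algebra_simps)

lemma eisenstein_norm_eq_1_iff:
  fixes m n :: int
  shows "m\<^sup>2 - m * n + n\<^sup>2 = 1 \<longleftrightarrow> max \<bar>m\<bar> (max \<bar>n\<bar> \<bar>m - n\<bar>) = 1"
proof
  assume norm: "m\<^sup>2 - m * n + n\<^sup>2 = 1"
  have "(2 * m - n)\<^sup>2 + 3 * n\<^sup>2 = 4" "(2 * n - m)\<^sup>2 + 3 * m\<^sup>2 = 4"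
    using norm by (simp_all add: power2_eq_square algebra_simps)
  then have "n\<^sup>2 \<le> 1" "m\<^sup>2 \<le> 1"
    by (smt (verit) zero_le_power2)+
  then have "m \<in> {-1, 0, 1}" "n \<in> {-1, 0, 1}"
    by (auto simp: abs_square_le_1)
  then show "max \<bar>m\<bar> (max \<bar>n\<bar> \<bar>m - n\<bar>) = 1"
    using norm by auto
next
  assume "max \<bar>m\<bar> (max \<bar>n\<bar> \<bar>m - n\<bar>) = 1"
  moreover from this have "m \<in> {-1, 0, 1}" "n \<in> {-1, 0, 1}"
    by auto
  ultimately show "m\<^sup>2 - m * n + n\<^sup>2 = 1"
    by auto
qed

lemma tri_adj_iff_hex_dist: "tri_adj p q \<longleftrightarrow> hex_dist p q = 1"
proof -
  obtain a b c e where pq: "p = (a, b)" "q = (c, e)"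
    by (cases p, cases q) auto
  define m where "m = a - c"
  define n where "n = b - e"
  have "tri_pt p - tri_pt q = Complex (of_int m - of_int n / 2) (of_int n * sqrt 3 / 2)"
    by (simp add: complex_eq_iff tri_pt_def alpha1_def alpha2_def pq m_def n_def field_simps)
  moreover have "(of_int m - of_int n / 2)\<^sup>2 + (of_int n * sqrt 3 / 2)\<^sup>2
                   = (of_int (m\<^sup>2 - m * n + n\<^sup>2) :: real)"
    by (simp add: power2_eq_square algebra_simps)
  ultimately have "tri_adj p q \<longleftrightarrow> m\<^sup>2 - m * n + n\<^sup>2 = 1"
    unfolding tri_adj_def by (simp add: cmod_def del: of_int_add of_int_diff of_int_mult of_int_power)
  also have "\<dots> \<longleftrightarrow> hex_dist p q = 1"
    unfolding eisenstein_norm_eq_1_iff hex_dist_def pq m_def n_def by (simp add: algebra_simps)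
  finally show ?thesis .
qed

lemma is_walk_Cons:
  "is_walk V E (u # ps) \<longleftrightarrow> u \<in> V \<and> (ps = [] \<or> E u (hd ps) \<and> is_walk V E ps)"
  unfolding is_walk_def by (cases ps) (auto simp: All_less_Suc2)

lemma hex_dist_le_walk_length:
  "is_walk V tri_adj ps \<Longrightarrow> hex_dist (hd ps) (last ps) \<le> int (length ps) - 1"
proof (induction ps)
  case Nil
  then show ?case by (simp add: is_walk_def)
next
  case (Cons u ps)
  show ?case
  proof (cases "ps = []")
    case True
    then show ?thesis by (simp add: hex_dist_def)
  next
    case False
    with Cons have "hex_dist u (hd ps) = 1" "hex_dist (hd ps) (last ps) \<le> int (length ps) - 1"
      by (simp_all add: is_walk_Cons tri_adj_iff_hex_dist)
    with False show ?thesis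
      using hex_dist_triangle[of u "last ps" "hd ps"] by simp
  qed
qed

definition lattice_triangle :: "int \<Rightarrow> int \<Rightarrow> int \<Rightarrow> (int \<times> int) set" where
  "lattice_triangle x0 z0 y1 = {(a, b). x0 \<le> a - b \<and> z0 \<le> b \<and> a \<le> y1}"

lemma finite_lattice_triangle: "finite (lattice_triangle x0 z0 y1)"
proof (rule finite_subset)
  show "lattice_triangle x0 z0 y1 \<subseteq> {x0 + z0..y1} \<times> {z0..y1 - x0}"
    by (auto simp: lattice_triangle_def)
qed simp

lemma tri_V_eq_lattice_triangle: "tri_V d = lattice_triangle 0 0 (int d)"
  unfolding tri_V_def lattice_triangle_def by auto

lemma inner_S_eq_lattice_triangle: "inner_S d = lattice_triangle 1 1 (int d - 1)"
  unfolding inner_S_def tri_V_def lattice_triangle_def xyz_def by auto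


lemma lattice_triangle_step_towards:
  assumes "u \<in> lattice_triangle x0 z0 y1" "v \<in> lattice_triangle x0 z0 y1"
    and "hex_dist u v = int n + 1"
  shows "\<exists>w \<in> lattice_triangle x0 z0 y1. hex_dist u w = 1 \<and> hex_dist w v = int n"
proof -
  obtain a b c e where uv: "u = (a, b)" "v = (c, e)"
    by (cases u, cases v) auto
  have inside: "x0 \<le> a - b" "z0 \<le> b" "a \<le> y1" "x0 \<le> c - e" "z0 \<le> e" "c \<le> y1"
    using assms(1,2) uv by (auto simp: lattice_triangle_def)
  have far: "\<bar>a - c\<bar> \<le> int n + 1" "\<bar>b - e\<bar> \<le> int n + 1" "\<bar>(a - b) - (c - e)\<bar> \<le> int n + 1"
    using assms(3) hex_dist_ge[of u v] uv by auto
  have step: "\<exists>w \<in> lattice_triangle x0 z0 y1. hex_dist u w = 1 \<and> hex_dist w v = int n"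
    if "w \<in> lattice_triangle x0 z0 y1" "hex_dist u w = 1" "hex_dist w v \<le> int n" for w
    using that assms(3) hex_dist_triangle[of u v w] by (intro bexI[of _ w]) auto
  consider "a < c" "b < e" | "c < a" "e < b" | "a < c" "e \<le> b" | "c < a" "b \<le> e"
    | "a = c" "b < e" | "a = c" "e < b"
    using assms(3) uv by (fastforce simp: hex_dist_def)
  then show ?thesis
  proof cases
    case 1
    show ?thesis by (rule step[of "(a + 1, b + 1)"])
      (use 1 inside far in \<open>auto simp: lattice_triangle_def hex_dist_le_iff uv hex_dist_def\<close>)
  next
    case 2
    show ?thesis by (rule step[of "(a - 1, b - 1)"])
      (use 2 inside far in \<open>auto simp: lattice_triangle_def hex_dist_le_iff uv hex_dist_def\<close>)
  next
    case 3
    show ?thesis by (rule step[of "(a + 1, b)"])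
      (use 3 inside far in \<open>auto simp: lattice_triangle_def hex_dist_le_iff uv hex_dist_def\<close>)
  next
    case 4
    show ?thesis by (rule step[of "(a - 1, b)"])
      (use 4 inside far in \<open>auto simp: lattice_triangle_def hex_dist_le_iff uv hex_dist_def\<close>)
  next
    case 5
    show ?thesis by (rule step[of "(a, b + 1)"])
      (use 5 inside far in \<open>auto simp: lattice_triangle_def hex_dist_le_iff uv hex_dist_def\<close>)
  next
    case 6
    show ?thesis by (rule step[of "(a, b - 1)"])
      (use 6 inside far in \<open>auto simp: lattice_triangle_def hex_dist_le_iff uv hex_dist_def\<close>)
  qed
qed

lemma lattice_triangle_walk_of_hex_dist:
  assumes "u \<in> lattice_triangle x0 z0 y1" "v \<in> lattice_triangle x0 z0 y1"
    and "hex_dist u v = int n"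
  shows "\<exists>ps. is_walk (lattice_triangle x0 z0 y1) tri_adj ps \<and> hd ps = u \<and> last ps = v
           \<and> length ps = Suc n"
  using assms(1,3)
proof (induction n arbitrary: u)
  case 0
  then show ?case
    by (intro exI[of _ "[u]"]) (simp add: is_walk_def hex_dist_eq_0_iff)
next
  case (Suc n)
  then obtain w where w: "w \<in> lattice_triangle x0 z0 y1" "hex_dist u w = 1" "hex_dist w v = int n"
    using lattice_triangle_step_towards[OF _ assms(2)] by fastforce
  then obtain ps where ps: "is_walk (lattice_triangle x0 z0 y1) tri_adj ps" "hd ps = w"
      "last ps = v" "length ps = Suc n"
    using Suc.IH by blast
  then have "is_walk (lattice_triangle x0 z0 y1) tri_adj (u # ps)"
    using Suc.prems(1) w(2) by (auto simp: is_walk_Cons tri_adj_iff_hex_dist)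
  with ps show ?case
    by (intro exI[of _ "u # ps"]) auto
qed

lemma gdist_lattice_triangle:
  assumes "u \<in> lattice_triangle x0 z0 y1" "v \<in> lattice_triangle x0 z0 y1"
  shows "gdist (lattice_triangle x0 z0 y1) tri_adj u v = nat (hex_dist u v)"
  unfolding gdist_def
proof (rule Least_equality)
  show "\<exists>ps. is_walk (lattice_triangle x0 z0 y1) tri_adj ps \<and> hd ps = u \<and> last ps = v
          \<and> length ps = Suc (nat (hex_dist u v))"
    using lattice_triangle_walk_of_hex_dist[OF assms] hex_dist_nonneg[of u v] by simp
next
  fix m
  assume "\<exists>ps. is_walk (lattice_triangle x0 z0 y1) tri_adj ps \<and> hd ps = u \<and> last ps = v
            \<and> length ps = Suc m"
  then show "nat (hex_dist u v) \<le> m"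
    using hex_dist_le_walk_length by fastforce
qed

lemma ecc_lattice_triangle:
  assumes v: "(a, b) \<in> lattice_triangle x0 z0 y1"
  shows "ecc (lattice_triangle x0 z0 y1) tri_adj (a, b)
           = nat (max (a - x0 - z0) (max (y1 - z0 - (a - b)) (y1 - x0 - b)))"
    (is "_ = nat ?r")
proof -
  let ?T = "lattice_triangle x0 z0 y1"
  have "gdist ?T tri_adj (a, b) ` ?T = (\<lambda>w. nat (hex_dist (a, b) w)) ` ?T"
    using gdist_lattice_triangle[OF v] by auto
  moreover have "Max ((\<lambda>w. nat (hex_dist (a, b) w)) ` ?T) = nat ?r"
  proof (rule Max_eqI)
    show "finite ((\<lambda>w. nat (hex_dist (a, b) w)) ` ?T)"
      using finite_lattice_triangle by simp
  next
    fix k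
    assume "k \<in> (\<lambda>w. nat (hex_dist (a, b) w)) ` ?T"
    then obtain c e where "(c, e) \<in> ?T" "k = nat (hex_dist (a, b) (c, e))"
      by auto
    with v show "k \<le> nat ?r"
      unfolding lattice_triangle_def by (auto simp: hex_dist_le_iff intro!: nat_mono)
  next
    have corners: "(x0 + z0, z0) \<in> ?T" "(y1, z0) \<in> ?T" "(y1, y1 - x0) \<in> ?T"
      using v by (auto simp: lattice_triangle_def)
    moreover have "hex_dist (a, b) (x0 + z0, z0) = a - x0 - z0"
        "hex_dist (a, b) (y1, z0) = y1 - z0 - (a - b)"
        "hex_dist (a, b) (y1, y1 - x0) = y1 - x0 - b"
      using v by (auto simp: lattice_triangle_def hex_dist_def)
    moreover have "?r \<in> {a - x0 - z0, y1 - z0 - (a - b), y1 - x0 - b}"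
      by (simp add: max_def)
    ultimately show "nat ?r \<in> (\<lambda>w. nat (hex_dist (a, b) w)) ` ?T"
      by (metis empty_iff image_eqI insertE)
  qed
  ultimately show ?thesis
    unfolding ecc_def by simp
qed

theorem mainTheorem11:
  fixes d :: nat
  assumes "d \<ge> 3"
  shows "bij_betw shift_map (inner_S d) (tri_V (d - 3))
     \<and> (\<forall>u\<in>inner_S d. \<forall>v\<in>inner_S d. tri_adj u v \<longleftrightarrow> tri_adj (shift_map u) (shift_map v))
     \<and> (\<forall>v\<in>inner_S d. ecc (tri_V d) tri_adj v = ecc (inner_S d) tri_adj v + 2)"
proof (intro conjI ballI)
  have "int (d - 3) = int d - 3"
    using assms by simp
  then show "bij_betw shift_map (inner_S d) (tri_V (d - 3))"
    unfolding inner_S_eq_lattice_triangle tri_V_eq_lattice_triangle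
    by (intro bij_betw_byWitness[where f' = "\<lambda>(a, b). (a + 2, b + 1)"])
      (auto simp: shift_map_def lattice_triangle_def)
next
  fix u v
  show "tri_adj u v \<longleftrightarrow> tri_adj (shift_map u) (shift_map v)"
    using hex_dist_translate[of u "-2" "-1" v]
    by (simp add: tri_adj_iff_hex_dist shift_map_def)
next
  fix v
  assume "v \<in> inner_S d"
  then obtain a b where v: "v = (a, b)" "(a, b) \<in> lattice_triangle 1 1 (int d - 1)"
    by (cases v) (simp add: inner_S_eq_lattice_triangle)
  moreover from v have "(a, b) \<in> lattice_triangle 0 0 (int d)"
    by (simp add: lattice_triangle_def)
  ultimately show "ecc (tri_V d) tri_adj v = ecc (inner_S d) tri_adj v + 2"
    unfolding inner_S_eq_lattice_triangle tri_V_eq_lattice_triangle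
    by (simp only: ecc_lattice_triangle) (auto simp: lattice_triangle_def)
qed

end
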